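(* Let $s>0$ be real, and let $n\ge2$ and $r\ge1$ be integers. Let $N=\min(n+r,\,2n-1)$. Then there exist a finite graph $G$ that is a vertex-disjoint union of $r$ cycles (so $\mathrm{FvsNum}(G)=r$) and $n$ agents with additive valuations such that no $s$-separated allocation $(A_1,\dots,A_n)$ satisfies $v_i(A_i)\ge\mathrm{MMS}_i^{N-1,s}$ for every $i\in[n]$. The same holds if zero-valued tree components are added to $G$.
   Context: Cake model: the cake is a finite undirected graph $G$ whose edges are segments of positive length; points of $G$ are its vertices and the points on its edges. A piece of cake is a finite union of intervals contained in edges, together possibly with some vertices. A piece $X$ is connected if any two points of $X$ can be joined by a path in $G$ that stays inside $X$. An additive valuation is a nonatomic measure on the cake. Distances: $\mathrm{Dist}^G(x,y)$ is the length of a shortest path along the edges, and is $\infty$ if $x$ and $y$ lie in different components. For sets, $\mathrm{Dist}^G(X,Y)=\inf_{x\in X,y\in Y}\mathrm{Dist}^G(x,y)$. Separation: a $k$-partition is $s$-separated if it consists of $k$ pairwise disjoint connected pieces $P_1,\dots,P_k$ with $\mathrm{Dist}^G(P_i,P_j)\ge s$ for $i\ne j$. An $s$-separated allocation is a vector of connected pieces satisfying the same condition. Maximin share: $\mathrm{MMS}_i^{k,s}=\sup\min_{j\in[k]}v_i(P_j)$, where the supremum ranges over $s$-separated $k$-partitions. $\mathrm{FvsNum}(G)$ is the minimum number of vertices whose removal from $G$ leaves an acyclic graph. *)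

theory Defs
  imports "HOL-Analysis.Analysis"
begin

record ('v,'e) cgraph =
  verts :: "'v set"
  edges :: "'e set"
  src   :: "'e \<Rightarrow> 'v"
  tgt   :: "'e \<Rightarrow> 'v"
  elen  :: "'e \<Rightarrow> real"

definition wf_cgraph :: "('v,'e) cgraph \<Rightarrow> bool" where
  "wf_cgraph G \<longleftrightarrow> finite (verts G) \<and> finite (edges G) \<and>
     (\<forall>e\<in>edges G. src G e \<in> verts G \<and> tgt G e \<in> verts G \<and> elen G e > 0)"

text \<open>Points of the cake: vertices, and interior points of edges
  (Pt e t with 0 < t < elen e; edge e is parametrised from src e to tgt e).\<close>
datatype ('v,'e) cpoint = Vtx 'v | Pt 'e real

definition cake_points :: "('v,'e) cgraph \<Rightarrow> ('v,'e) cpoint set" where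
  "cake_points G = Vtx ` verts G \<union> {Pt e t | e t. e \<in> edges G \<and> 0 < t \<and> t < elen G e}"

definition loc :: "('v,'e) cgraph \<Rightarrow> 'e \<Rightarrow> real \<Rightarrow> ('v,'e) cpoint" where
  "loc G e t = (if t \<le> 0 then Vtx (src G e) else if elen G e \<le> t then Vtx (tgt G e) else Pt e t)"

definition valid_step :: "('v,'e) cgraph \<Rightarrow> 'e \<times> real \<times> real \<Rightarrow> bool" where
  "valid_step G w = (case w of (e,a,b) \<Rightarrow>
     e \<in> edges G \<and> 0 \<le> a \<and> a \<le> elen G e \<and> 0 \<le> b \<and> b \<le> elen G e)"

definition step_start :: "('v,'e) cgraph \<Rightarrow> 'e \<times> real \<times> real \<Rightarrow> ('v,'e) cpoint" where
  "step_start G w = (case w of (e,a,b) \<Rightarrow> loc G e a)"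

definition step_end :: "('v,'e) cgraph \<Rightarrow> 'e \<times> real \<times> real \<Rightarrow> ('v,'e) cpoint" where
  "step_end G w = (case w of (e,a,b) \<Rightarrow> loc G e b)"

definition step_points :: "('v,'e) cgraph \<Rightarrow> 'e \<times> real \<times> real \<Rightarrow> ('v,'e) cpoint set" where
  "step_points G w = (case w of (e,a,b) \<Rightarrow> loc G e ` {min a b .. max a b})"

definition step_len :: "'e \<times> real \<times> real \<Rightarrow> real" where
  "step_len w = (case w of (e,a,b) \<Rightarrow> \<bar>b - a\<bar>)"

definition is_walk :: "('v,'e) cgraph \<Rightarrow> ('v,'e) cpoint \<Rightarrow> ('v,'e) cpoint
    \<Rightarrow> ('e \<times> real \<times> real) list \<Rightarrow> bool" where
  "is_walk G x y ws \<longleftrightarrow>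
     (ws = [] \<and> x = y \<and> x \<in> cake_points G) \<or>
     (ws \<noteq> [] \<and> (\<forall>w\<in>set ws. valid_step G w) \<and>
      step_start G (hd ws) = x \<and> step_end G (last ws) = y \<and>
      (\<forall>i. Suc i < length ws \<longrightarrow> step_end G (ws ! i) = step_start G (ws ! Suc i)))"

definition walk_points :: "('v,'e) cgraph \<Rightarrow> ('v,'e) cpoint
    \<Rightarrow> ('e \<times> real \<times> real) list \<Rightarrow> ('v,'e) cpoint set" where
  "walk_points G x ws = (if ws = [] then {x} else \<Union> (step_points G ` set ws))"

definition walk_len :: "('e \<times> real \<times> real) list \<Rightarrow> real" where
  "walk_len ws = sum_list (map step_len ws)"

text \<open>Shortest-path distance; infinite (Inf of the empty set) across components.\<close>
definition Dist :: "('v,'e) cgraph \<Rightarrow> ('v,'e) cpoint \<Rightarrow> ('v,'e) cpoint \<Rightarrow> ereal" where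
  "Dist G x y = (INF ws \<in> {ws. is_walk G x y ws}. ereal (walk_len ws))"

definition SetDist :: "('v,'e) cgraph \<Rightarrow> ('v,'e) cpoint set \<Rightarrow> ('v,'e) cpoint set \<Rightarrow> ereal" where
  "SetDist G X Y = (INF x \<in> X. INF y \<in> Y. Dist G x y)"

definition is_piece :: "('v,'e) cgraph \<Rightarrow> ('v,'e) cpoint set \<Rightarrow> bool" where
  "is_piece G X \<longleftrightarrow> X \<subseteq> cake_points G \<and>
     (\<forall>e\<in>edges G. \<exists>I. finite I \<and> (\<forall>J\<in>I. is_interval (J :: real set)) \<and>
        {t. 0 < t \<and> t < elen G e \<and> Pt e t \<in> X} = \<Union> I)"

definition connected_piece :: "('v,'e) cgraph \<Rightarrow> ('v,'e) cpoint set \<Rightarrow> bool" where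
  "connected_piece G X \<longleftrightarrow> is_piece G X \<and>
     (\<forall>x\<in>X. \<forall>y\<in>X. \<exists>ws. is_walk G x y ws \<and> walk_points G x ws \<subseteq> X)"

text \<open>A measure on the cake is given by its restriction to each (open) edge,
  a finite nonatomic Borel measure on the parameter line; vertices carry no mass.\<close>
definition valuation :: "('v,'e) cgraph \<Rightarrow> ('e \<Rightarrow> real measure) \<Rightarrow> bool" where
  "valuation G \<mu> \<longleftrightarrow> (\<forall>e\<in>edges G. sets (\<mu> e) = sets borel \<and> finite_measure (\<mu> e) \<and>
      (\<forall>t. emeasure (\<mu> e) {t} = 0))"

definition val :: "('v,'e) cgraph \<Rightarrow> ('e \<Rightarrow> real measure) \<Rightarrow> ('v,'e) cpoint set \<Rightarrow> real" where
  "val G \<mu> X = (\<Sum>e\<in>edges G. measure (\<mu> e) {t. 0 < t \<and> t < elen G e \<and> Pt e t \<in> X})"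

definition sep_family :: "('v,'e) cgraph \<Rightarrow> real \<Rightarrow> nat \<Rightarrow> (nat \<Rightarrow> ('v,'e) cpoint set) \<Rightarrow> bool" where
  "sep_family G s k P \<longleftrightarrow> (\<forall>j<k. connected_piece G (P j)) \<and>
     (\<forall>i<k. \<forall>j<k. i \<noteq> j \<longrightarrow> P i \<inter> P j = {} \<and> ereal s \<le> SetDist G (P i) (P j))"

definition MMS :: "('v,'e) cgraph \<Rightarrow> ('e \<Rightarrow> real measure) \<Rightarrow> nat \<Rightarrow> real \<Rightarrow> real" where
  "MMS G \<mu> k s = Sup {Min ((\<lambda>j. val G \<mu> (P j)) ` {..<k}) | P. sep_family G s k P}"

definition is_cycle :: "('v,'e) cgraph \<Rightarrow> 'e list \<Rightarrow> 'v list \<Rightarrow> bool" where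
  "is_cycle G es vs \<longleftrightarrow> es \<noteq> [] \<and> length es = length vs \<and> distinct es \<and> distinct vs \<and>
     set es \<subseteq> edges G \<and> set vs \<subseteq> verts G \<and>
     (\<forall>j<length es. {src G (es ! j), tgt G (es ! j)} = {vs ! j, vs ! ((j + 1) mod length vs)})"

definition acyclic_g :: "('v,'e) cgraph \<Rightarrow> bool" where
  "acyclic_g G \<longleftrightarrow> \<not> (\<exists>es vs. is_cycle G es vs)"

definition delete_verts :: "('v,'e) cgraph \<Rightarrow> 'v set \<Rightarrow> ('v,'e) cgraph" where
  "delete_verts G S = G\<lparr>verts := verts G - S,
      edges := {e \<in> edges G. src G e \<notin> S \<and> tgt G e \<notin> S}\<rparr>"

definition FvsNum :: "('v,'e) cgraph \<Rightarrow> nat" where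
  "FvsNum G = (LEAST k. \<exists>S \<subseteq> verts G. card S = k \<and> acyclic_g (delete_verts G S))"

definition union_of_cycles :: "('v,'e) cgraph \<Rightarrow> nat \<Rightarrow> bool" where
  "union_of_cycles G r \<longleftrightarrow> (\<exists>C :: nat \<Rightarrow> 'e list \<times> 'v list.
     (\<forall>j<r. is_cycle G (fst (C j)) (snd (C j))) \<and>
     (\<forall>i<r. \<forall>j<r. i \<noteq> j \<longrightarrow> set (snd (C i)) \<inter> set (snd (C j)) = {}) \<and>
     verts G = (\<Union>j<r. set (snd (C j))) \<and> edges G = (\<Union>j<r. set (fst (C j))))"

definition extends_by_trees :: "('v,'e) cgraph \<Rightarrow> ('v,'e) cgraph \<Rightarrow> bool" where
  "extends_by_trees G H \<longleftrightarrow> wf_cgraph H \<and> verts G \<subseteq> verts H \<and> edges G \<subseteq> edges H \<and>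
     (\<forall>e\<in>edges G. src H e = src G e \<and> tgt H e = tgt G e \<and> elen H e = elen G e) \<and>
     (\<forall>e\<in>edges H - edges G. src H e \<notin> verts G \<and> tgt H e \<notin> verts G) \<and>
     acyclic_g (delete_verts H (verts G))"

definition zero_extension :: "('v,'e) cgraph \<Rightarrow> ('v,'e) cgraph \<Rightarrow> ('e \<Rightarrow> real measure)
    \<Rightarrow> ('e \<Rightarrow> real measure) \<Rightarrow> bool" where
  "zero_extension G H \<mu> \<nu> \<longleftrightarrow> valuation H \<nu> \<and> (\<forall>e\<in>edges G. \<nu> e = \<mu> e) \<and>
     (\<forall>e\<in>edges H - edges G. emeasure (\<nu> e) {0<..<elen H e} = 0)"

end

theory Submission
  imports Defs
begin

(* Take r loops and let agent i value, on min r (n - 1) of them, only tiny spots of width w: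
   the loop is cut into m windows of length s + w (m = n - min r (n - 1) + 1 on the first loop,
   m = 2 on the others) and agent i's spot sits at phase (i + 1) v in each window, where
   v = (s + w) / (n + 1) and (n + 1) w < v.  The min (n + r, 2 n - 1) - 1 spots of an agent form
   an s-separated partition, so every maximin share is positive and each agent must receive a
   point of one of its spots.  As the numbers m - 1 add up to n - 1, some loop receives m such
   points of distinct agents.  But m points pairwise s apart on a circle of length m (s + w) are
   rigid: every clockwise gap between them is a multiple of s + w up to m w, whereas between
   spots of distinct agents it is off every such multiple by at least v - w. *)

section \<open>Circular distance\<close>

definition circ_dist :: "real \<Rightarrow> real \<Rightarrow> real \<Rightarrow> real" where
  "circ_dist L x y = min \<bar>x - y\<bar> (L - \<bar>x - y\<bar>)"

definition cw_gap :: "real \<Rightarrow> real \<Rightarrow> real \<Rightarrow> real" where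
  "cw_gap L x y = (if x < y then y - x else y - x + L)"

lemma circ_dist_triangle:
  "x \<in> {0..<L} \<Longrightarrow> y \<in> {0..<L} \<Longrightarrow> z \<in> {0..<L} \<Longrightarrow>
    circ_dist L x z \<le> circ_dist L x y + circ_dist L y z"
  by (auto simp: circ_dist_def min_def abs_if)

lemma cw_gap_le: "x \<in> {0..L} \<Longrightarrow> y \<in> {0..L} \<Longrightarrow> cw_gap L x y \<le> L"
  by (auto simp: cw_gap_def)

lemma separated_points_span:
  fixes f :: "'a \<Rightarrow> real"
  assumes "finite F" "F \<noteq> {}" "\<forall>x\<in>F. f x \<in> {lo..hi}"
    and "\<forall>x\<in>F. \<forall>y\<in>F. x \<noteq> y \<longrightarrow> s \<le> \<bar>f x - f y\<bar>" and "0 \<le> s"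
  shows "(real (card F) - 1) * s \<le> hi - lo"
  using assms
proof (induction "card F" arbitrary: F hi)
  case 0
  then show ?case by simp
next
  case (Suc k)
  have "Max (f ` F) \<in> f ` F" using Suc.prems(1,2) by (intro Max_in) auto
  then obtain x where x: "x \<in> F" "f x = Max (f ` F)" by auto
  have top: "\<forall>y\<in>F. f y \<le> f x" using x Suc.prems(1) by auto
  show ?case
  proof (cases "F = {x}")
    case True
    then show ?thesis using Suc.prems by auto
  next
    case False
    have "(real (card (F - {x})) - 1) * s \<le> (f x - s) - lo"
    proof (rule Suc.hyps(1))
      show "k = card (F - {x})" using Suc.hyps(2) x Suc.prems(1) by simp
      show "F - {x} \<noteq> {}" using False x(1) by auto
      show "\<forall>y\<in>F - {x}. f y \<in> {lo..f x - s}"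
        using Suc.prems(3,4) top x(1) by fastforce
    qed (use Suc.prems in auto)
    moreover have "real (card (F - {x})) = real (card F) - 1"
      using x(1) Suc.prems(1) Suc.hyps(2) by simp
    moreover have "f x \<le> hi" using Suc.prems(3) x(1) by auto
    ultimately show ?thesis by (simp add: algebra_simps)
  qed
qed

text \<open>The witness c is one more than the number of points strictly inside the clockwise gap
  from T p to T q; the points on either side of T q are packed at mutual distance s.\<close>

lemma cw_gap_separated_bounds:
  fixes T :: "'a \<Rightarrow> real"
  assumes F: "finite F" and p: "p \<in> F" and q: "q \<in> F" "q \<noteq> p" and s: "s > 0"
    and range: "\<forall>i\<in>F. T i \<in> {0<..<L}"
    and sep: "\<forall>i\<in>F. \<forall>i'\<in>F. i \<noteq> i' \<longrightarrow> s \<le> circ_dist L (T i) (T i')"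
    and m: "m \<le> card F"
  shows "\<exists>c::nat. real c * s \<le> cw_gap L (T p) (T q) \<and>
    cw_gap L (T p) (T q) \<le> L - (real m - real c) * s"
proof -
  define g where "g i = cw_gap L (T p) (T i)" for i
  have g_range: "g i \<in> {s..L - s}" if "i \<in> F - {p}" for i
  proof -
    have "s \<le> circ_dist L (T i) (T p)" using sep that p by auto
    then have "s \<le> \<bar>T i - T p\<bar>" "s \<le> L - \<bar>T i - T p\<bar>" by (auto simp: circ_dist_def)
    then show ?thesis unfolding g_def cw_gap_def using s by (auto simp: abs_if split: if_splits)
  qed
  have g_sep: "s \<le> \<bar>g i - g i'\<bar>" if "i \<in> F - {p}" "i' \<in> F - {p}" "i \<noteq> i'" for i i'
  proof -
    have "s \<le> circ_dist L (T i) (T i')" using sep that by auto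
    then have "s \<le> \<bar>T i - T i'\<bar>" "s \<le> L - \<bar>T i - T i'\<bar>" by (auto simp: circ_dist_def)
    moreover have "s \<le> \<bar>T i - T p\<bar>" "s \<le> \<bar>T i' - T p\<bar>"
      using sep that p by (auto simp: circ_dist_def)
    ultimately show ?thesis unfolding g_def cw_gap_def using s by (auto simp: abs_if)
  qed
  define B where "B = {i \<in> F - {p}. g i < g q}"
  define A where "A = {i \<in> F - {p}. g q < g i}"
  have qF: "q \<in> F - {p}" using q by auto
  have "g i < g q \<or> g q < g i" if "i \<in> F - {p}" "i \<noteq> q" for i
    using g_sep[OF that(1) qF that(2)] s by (auto simp: abs_if split: if_splits)
  then have split: "F - {p} = insert q (B \<union> A)"
    using qF by (auto simp: A_def B_def)
  have fin: "finite A" "finite B" using F by (auto simp: A_def B_def)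
  have "q \<notin> B \<union> A" "B \<inter> A = {}" by (auto simp: A_def B_def)
  then have "card (F - {p}) = Suc (card B + card A)"
    unfolding split using fin by (simp add: card_Un_disjoint)
  moreover have "card F = Suc (card (F - {p}))" using card_Suc_Diff1[OF F p] by simp
  ultimately have card_F: "real (card F) = real (card B) + real (card A) + 2" by simp
  have "(real (card (insert q B)) - 1) * s \<le> g q - s"
  proof (rule separated_points_span[where f = g])
    show "\<forall>x\<in>insert q B. \<forall>y\<in>insert q B. x \<noteq> y \<longrightarrow> s \<le> \<bar>g x - g y\<bar>"
      using g_sep qF unfolding B_def by blast
    show "\<forall>x\<in>insert q B. g x \<in> {s..g q}" using g_range qF by (auto simp: B_def)
  qed (use fin s in auto)
  then have below: "real (card B) * s \<le> g q - s"
    using fin by (simp add: B_def)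
  have "(real (card (insert q A)) - 1) * s \<le> (L - s) - g q"
  proof (rule separated_points_span[where f = g])
    show "\<forall>x\<in>insert q A. \<forall>y\<in>insert q A. x \<noteq> y \<longrightarrow> s \<le> \<bar>g x - g y\<bar>"
      using g_sep qF unfolding A_def by blast
    show "\<forall>x\<in>insert q A. g x \<in> {g q..L - s}" using g_range qF by (auto simp: A_def)
  qed (use fin s in auto)
  then have above: "real (card A) * s \<le> (L - s) - g q"
    using fin by (simp add: A_def)
  have "(real m - real (card B + 1)) * s \<le> (real (card A) + 1) * s"
    using m card_F s by (intro mult_right_mono) auto
  then show ?thesis
    using below above by (intro exI[of _ "card B + 1"]) (simp add: g_def algebra_simps)
qed

lemma pigeonhole_weighted:
  fixes f :: "'a \<Rightarrow> 'b" and m :: "'b \<Rightarrow> nat"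
  assumes "finite A" "finite B" "f ` A \<subseteq> B" "(\<Sum>j\<in>B. m j - 1) < card A"
  shows "\<exists>j\<in>B. m j \<le> card {a\<in>A. f a = j}"
proof (rule ccontr)
  assume "\<not> ?thesis"
  then have small: "\<forall>j\<in>B. card {a\<in>A. f a = j} \<le> m j - 1" by force
  have "A = (\<Union>j\<in>B. {a\<in>A. f a = j})" using assms(3) by auto
  then have "card A = card (\<Union>j\<in>B. {a\<in>A. f a = j})" by simp
  also have "\<dots> = (\<Sum>j\<in>B. card {a\<in>A. f a = j})"
    using assms(1,2) by (intro card_UN_disjoint) auto
  also have "\<dots> \<le> (\<Sum>j\<in>B. m j - 1)" using small by (intro sum_mono) auto
  finally show False using assms(4) by simp
qed

lemma is_walk_tail:
  assumes "is_walk H x y (w # ws)" "ws \<noteq> []"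
  shows "is_walk H (step_end H w) y ws"
  unfolding is_walk_def
proof (rule disjI2, intro conjI allI impI)
  show "step_start H (hd ws) = step_end H w"
    using assms by (auto simp: is_walk_def hd_conv_nth elim!: allE[of _ 0])
  fix i assume "Suc i < length ws"
  then show "step_end H (ws ! i) = step_start H (ws ! Suc i)"
    using assms(1) by (auto simp: is_walk_def elim!: allE[of _ "Suc i"])
qed (use assms in \<open>auto simp: is_walk_def\<close>)

lemma SetDist_greatest: "(\<And>x y. x \<in> P \<Longrightarrow> y \<in> Q \<Longrightarrow> c \<le> Dist H x y) \<Longrightarrow> c \<le> SetDist H P Q"
  unfolding SetDist_def by (auto intro!: INF_greatest)

lemma SetDist_le_Dist: "x \<in> P \<Longrightarrow> y \<in> Q \<Longrightarrow> SetDist H P Q \<le> Dist H x y"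
  unfolding SetDist_def by (meson INF_lower order_trans)

definition arc :: "'e \<Rightarrow> real set \<Rightarrow> ('v, 'e) cpoint set" where
  "arc e I = Pt e ` I"

text \<open>The part of the cake on loop j is a circle of length L j; on_loop j x \<theta> says that x has
  angular coordinate \<theta> on it, the vertex having coordinate 0.\<close>

locale loop_cake =
  fixes H :: "(nat, nat) cgraph" and r :: nat and L :: "nat \<Rightarrow> real"
  assumes loops_isolated: "\<And>e. e \<in> edges H \<Longrightarrow> src H e < r \<or> tgt H e < r \<Longrightarrow> e < r"
    and loop: "\<And>e. e < r \<Longrightarrow> e \<in> edges H \<and> src H e = e \<and> tgt H e = e \<and> elen H e = L e"
    and loop_len_pos: "\<And>e. e < r \<Longrightarrow> L e > 0"
begin

definition on_loop :: "nat \<Rightarrow> (nat, nat) cpoint \<Rightarrow> real \<Rightarrow> bool" where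
  "on_loop j x \<theta> \<longleftrightarrow> j < r \<and> ((x = Vtx j \<and> \<theta> = 0) \<or> (x = Pt j \<theta> \<and> 0 < \<theta> \<and> \<theta> < L j))"

definition loop_coord :: "nat \<Rightarrow> real \<Rightarrow> real" where
  "loop_coord j a = (if a \<le> 0 \<or> L j \<le> a then 0 else a)"

lemma on_loop_unique: "on_loop j x a \<Longrightarrow> on_loop j' x b \<Longrightarrow> j = j' \<and> a = b"
  unfolding on_loop_def by auto

lemma on_loop_range: "on_loop j x \<theta> \<Longrightarrow> \<theta> \<in> {0..<L j}"
  using loop_len_pos unfolding on_loop_def by auto

lemma valid_step_on_loop:
  assumes step: "valid_step H (e, a, b)" and start: "step_start H (e, a, b) = x"
    and x: "on_loop j x \<theta>"
  shows "on_loop j (step_end H (e, a, b)) (loop_coord j b) \<and>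
    circ_dist (L j) \<theta> (loop_coord j b) \<le> \<bar>b - a\<bar>"
proof -
  have eH: "e \<in> edges H" and a: "0 \<le> a" "a \<le> elen H e" and b: "0 \<le> b" "b \<le> elen H e"
    using step by (auto simp: valid_step_def)
  have j: "j < r" using x by (simp add: on_loop_def)
  have ej: "e = j"
  proof (cases "a \<le> 0 \<or> elen H e \<le> a")
    case True
    then have "x = Vtx (src H e) \<or> x = Vtx (tgt H e)"
      using start by (auto simp: step_start_def loc_def)
    then have "src H e = j \<or> tgt H e = j" using x by (auto simp: on_loop_def)
    then show ?thesis using loops_isolated[OF eH] loop j by fastforce
  next
    case False
    then show ?thesis using start x by (auto simp: step_start_def loc_def on_loop_def)
  qed
  have len: "elen H e = L j" using loop[OF j] ej by simp
  have loc_on_loop: "on_loop j (loc H e t) (loop_coord j t)" if "0 \<le> t" "t \<le> L j" for t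
    using that loop[OF j] ej j len by (auto simp: on_loop_def loc_def loop_coord_def)
  have "on_loop j x (loop_coord j a)"
    using loc_on_loop[of a] a len start by (simp add: step_start_def)
  then have "\<theta> = loop_coord j a" using on_loop_unique x by blast
  moreover have "circ_dist (L j) (loop_coord j a) (loop_coord j b) \<le> \<bar>b - a\<bar>"
    using a b len loop_len_pos[OF j] by (auto simp: circ_dist_def loop_coord_def min_def abs_if)
  ultimately show ?thesis
    using loc_on_loop[of b] b len by (simp add: step_end_def)
qed

lemma walk_on_loop:
  "is_walk H x y ws \<Longrightarrow> on_loop j x \<theta> \<Longrightarrow>
    \<exists>\<theta>'. on_loop j y \<theta>' \<and> circ_dist (L j) \<theta> \<theta>' \<le> walk_len ws"
proof (induction ws arbitrary: x \<theta>)
  case Nil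
  then show ?case by (auto simp: is_walk_def walk_len_def circ_dist_def on_loop_def)
next
  case (Cons w ws)
  obtain e a b where w: "w = (e, a, b)" by (cases w)
  have "valid_step H w" "step_start H w = x" using Cons.prems by (auto simp: is_walk_def)
  then have step: "on_loop j (step_end H w) (loop_coord j b)"
    "circ_dist (L j) \<theta> (loop_coord j b) \<le> \<bar>b - a\<bar>"
    using valid_step_on_loop Cons.prems(2) unfolding w by blast+
  show ?case
  proof (cases "ws = []")
    case True
    then have "y = step_end H w" using Cons.prems by (auto simp: is_walk_def)
    then show ?thesis using step True w by (auto simp: walk_len_def step_len_def)
  next
    case False
    obtain \<theta>' where \<theta>': "on_loop j y \<theta>'" "circ_dist (L j) (loop_coord j b) \<theta>' \<le> walk_len ws"
      using Cons.IH[OF is_walk_tail[OF Cons.prems(1) False] step(1)] by blast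
    have "circ_dist (L j) \<theta> \<theta>' \<le> circ_dist (L j) \<theta> (loop_coord j b) + circ_dist (L j) (loop_coord j b) \<theta>'"
      using on_loop_range Cons.prems(2) step(1) \<theta>'(1) by (intro circ_dist_triangle)
    then show ?thesis using \<theta>' step w by (auto simp: walk_len_def step_len_def)
  qed
qed

lemma Dist_ge_on_loop:
  assumes "on_loop j x \<theta>" "\<And>\<theta>'. on_loop j y \<theta>' \<Longrightarrow> c \<le> circ_dist (L j) \<theta> \<theta>'"
  shows "ereal c \<le> Dist H x y"
  unfolding Dist_def
proof (rule INF_greatest)
  fix ws assume "ws \<in> {ws. is_walk H x y ws}"
  then obtain \<theta>' where "on_loop j y \<theta>'" "circ_dist (L j) \<theta> \<theta>' \<le> walk_len ws"
    using walk_on_loop assms(1) by blast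
  then show "ereal c \<le> ereal (walk_len ws)" using assms(2) by force
qed

lemma Dist_le_circ_dist:
  assumes j: "j < r" and t1: "t1 \<in> {0<..<L j}" and t2: "t2 \<in> {0<..<L j}"
  shows "Dist H (Pt j t1) (Pt j t2) \<le> ereal (circ_dist (L j) t1 t2)"
proof -
  have edge: "j \<in> edges H" "src H j = j" "tgt H j = j" "elen H j = L j" using loop[OF j] by auto
  have walk: "Dist H (Pt j t1) (Pt j t2) \<le> ereal (walk_len ws)" if "is_walk H (Pt j t1) (Pt j t2) ws" for ws
    unfolding Dist_def using that by (intro INF_lower) simp
  have direct: "Dist H (Pt j t1) (Pt j t2) \<le> ereal \<bar>t1 - t2\<bar>"
    using walk[of "[(j, t1, t2)]"] edge t1 t2
    by (simp add: is_walk_def valid_step_def step_start_def step_end_def loc_def walk_len_def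
        step_len_def abs_minus_commute)
  have around: "Dist H (Pt j t1) (Pt j t2) \<le> ereal (L j - \<bar>t1 - t2\<bar>)"
  proof (cases "t1 \<le> t2")
    case True
    have "is_walk H (Pt j t1) (Pt j t2) [(j, t1, 0), (j, L j, t2)]" using edge t1 t2
      by (simp add: is_walk_def valid_step_def step_start_def step_end_def loc_def nth_Cons
          split: nat.splits)
    moreover have "walk_len [(j, t1, 0), (j, L j, t2)] = L j - \<bar>t1 - t2\<bar>"
      using True t1 t2 by (simp add: walk_len_def step_len_def)
    ultimately show ?thesis using walk by metis
  next
    case False
    have "is_walk H (Pt j t1) (Pt j t2) [(j, t1, L j), (j, 0, t2)]" using edge t1 t2
      by (simp add: is_walk_def valid_step_def step_start_def step_end_def loc_def nth_Cons
          split: nat.splits)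
    moreover have "walk_len [(j, t1, L j), (j, 0, t2)] = L j - \<bar>t1 - t2\<bar>"
      using False t1 t2 by (simp add: walk_len_def step_len_def)
    ultimately show ?thesis using walk by metis
  qed
  show ?thesis using direct around by (simp add: circ_dist_def min_def)
qed

lemma arc_param_set:
  assumes "j < r" "I \<subseteq> {0<..<L j}" "e \<in> edges H"
  shows "{t. 0 < t \<and> t < elen H e \<and> Pt e t \<in> arc j I} = (if e = j then I else {})"
  using assms loop[of j] by (auto simp: arc_def)

lemma connected_piece_arc:
  assumes j: "j < r" and ab: "{a..b} \<subseteq> {0<..<L j}"
  shows "connected_piece H (arc j {a..b})"
proof -
  have edge: "j \<in> edges H" "src H j = j" "tgt H j = j" "elen H j = L j" using loop[OF j] by auto
  show ?thesis
    unfolding connected_piece_def is_piece_def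
  proof (intro conjI ballI)
  show "arc j {a..b} \<subseteq> cake_points H" using edge ab by (auto simp: cake_points_def arc_def)
  fix e assume "e \<in> edges H"
  then have params: "{t. 0 < t \<and> t < elen H e \<and> Pt e t \<in> arc j {a..b}} = (if e = j then {a..b} else {})"
    by (rule arc_param_set[OF j ab])
  show "\<exists>I. finite I \<and> (\<forall>J\<in>I. is_interval (J::real set)) \<and>
      {t. 0 < t \<and> t < elen H e \<and> Pt e t \<in> arc j {a..b}} = \<Union> I"
    by (rule exI[of _ "if e = j then {{a..b}} else {}"]) (auto simp: params)
next
  fix x y :: "(nat, nat) cpoint" assume "x \<in> arc j {a..b}" "y \<in> arc j {a..b}"
  then obtain t1 t2 where t: "x = Pt j t1" "y = Pt j t2" "t1 \<in> {a..b}" "t2 \<in> {a..b}"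
    by (auto simp: arc_def)
  have t_in: "t1 \<in> {0<..<L j}" "t2 \<in> {0<..<L j}" using t ab by auto
  then have "is_walk H x y [(j, t1, t2)]" using t edge
    by (auto simp: is_walk_def valid_step_def step_start_def step_end_def loc_def)
  moreover have "walk_points H x [(j, t1, t2)] \<subseteq> arc j {a..b}" using t edge t_in
    by (auto simp: walk_points_def step_points_def loc_def arc_def intro!: imageI)
  ultimately show "\<exists>ws. is_walk H x y ws \<and> walk_points H x ws \<subseteq> arc j {a..b}" by blast
  qed
qed

lemma sep_family_loop_points:
  assumes "sep_family H s k A" "i < k" "i' < k" "i \<noteq> i'" "j < r"
    and "Pt j t \<in> A i" "Pt j t' \<in> A i'" "t \<in> {0<..<L j}" "t' \<in> {0<..<L j}"
  shows "s \<le> circ_dist (L j) t t'"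
proof -
  have "ereal s \<le> SetDist H (A i) (A i')" using assms(1-4) by (auto simp: sep_family_def)
  also have "\<dots> \<le> Dist H (Pt j t) (Pt j t')" using assms(6,7) by (rule SetDist_le_Dist)
  also have "\<dots> \<le> ereal (circ_dist (L j) t t')" using assms(5,8,9) by (rule Dist_le_circ_dist)
  finally show ?thesis by simp
qed

end

lemma val_le_total:
  assumes "valuation H \<nu>"
  shows "val H \<nu> X \<le> (\<Sum>e\<in>edges H. measure (\<nu> e) (space (\<nu> e)))"
  unfolding val_def
proof (rule sum_mono)
  fix e assume "e \<in> edges H"
  then have "finite_measure (\<nu> e)" using assms by (auto simp: valuation_def)
  then show "measure (\<nu> e) {t. 0 < t \<and> t < elen H e \<and> Pt e t \<in> X} \<le> measure (\<nu> e) (space (\<nu> e))"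
    by (rule finite_measure.bounded_measure)
qed

lemma MMS_ge:
  assumes "valuation H \<nu>" "sep_family H s k P" "0 < k" "\<forall>j<k. c \<le> val H \<nu> (P j)"
  shows "c \<le> MMS H \<nu> k s"
proof -
  define Q where "Q = {Min ((\<lambda>j. val H \<nu> (P' j)) ` {..<k}) | P'. sep_family H s k P'}"
  have "Min ((\<lambda>j. val H \<nu> (P j)) ` {..<k}) \<in> Q" using assms(2) by (auto simp: Q_def)
  moreover have "c \<le> Min ((\<lambda>j. val H \<nu> (P j)) ` {..<k})" using assms(3,4) by (subst Min_ge_iff) auto
  moreover have "bdd_above Q"
  proof (rule bdd_aboveI)
    fix z assume "z \<in> Q"
    then obtain P' where z: "z = Min ((\<lambda>j. val H \<nu> (P' j)) ` {..<k})" by (auto simp: Q_def)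
    have "z \<le> val H \<nu> (P' 0)" unfolding z using assms(3) by (intro Min_le) auto
    also have "\<dots> \<le> (\<Sum>e\<in>edges H. measure (\<nu> e) (space (\<nu> e)))" using assms(1) by (rule val_le_total)
    finally show "z \<le> (\<Sum>e\<in>edges H. measure (\<nu> e) (space (\<nu> e)))" .
  qed
  ultimately show ?thesis unfolding MMS_def Q_def[symmetric] by (meson cSup_upper order_trans)
qed

lemma measure_restricted_pos_imp_meets:
  fixes S :: "real set"
  assumes "S \<in> sets borel" "measure (density lborel (indicator S)) X > 0"
  shows "X \<inter> S \<noteq> {}"
proof
  assume "X \<inter> S = {}"
  then have "emeasure (density lborel (indicator S)) X \<le> emeasure (density lborel (indicator S)) (- S)"
    using assms(1) by (intro emeasure_mono) auto
  also have "\<dots> = 0" using assms(1) by (subst emeasure_restricted) auto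
  finally show False using assms(2) by (simp add: measure_def)
qed

section \<open>The counterexample\<close>

locale counterexample =
  fixes n r :: nat and s :: real
  assumes s_pos: "s > 0" and n_ge_2: "n \<ge> 2" and r_ge_1: "r \<ge> 1"
begin

definition "nloops = min r (n - 1)"
definition "nspots j = (if j = 0 then n - nloops + 1 else if j < nloops then 2 else (1::nat))"
definition "width = s / (2 * (real n + 1)^2)"
definition "period = s + width"
definition "shift = period / (real n + 1)"
definition "loop_len j = real (nspots j) * period"
definition "spot_centre i l = real l * period + real (i + 1) * shift"
definition "spot i l = {spot_centre i l - width / 2 .. spot_centre i l + width / 2}"
definition "support i j = (if j < nloops then (\<Union>l<nspots j. spot i l) else {})"

lemma nloops_bounds: "1 \<le> nloops" "nloops \<le> n - 1" "nloops \<le> r"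
  using n_ge_2 r_ge_1 by (auto simp: nloops_def)

lemma nspots_bounds: "j < nloops \<Longrightarrow> 2 \<le> nspots j \<and> nspots j \<le> n"
  using nloops_bounds n_ge_2 by (auto simp: nspots_def)

lemma sum_nspots: "(\<Sum>j<nloops. nspots j - 1) = n - 1"
proof -
  obtain q where q: "nloops = Suc q" using nloops_bounds by (cases nloops) auto
  have "(\<Sum>j<nloops. nspots j - 1) = (nspots 0 - 1) + (\<Sum>j<q. nspots (Suc j) - 1)"
    unfolding q by (rule sum.lessThan_Suc_shift)
  also have "(\<Sum>j<q. nspots (Suc j) - 1) = (\<Sum>j<q. 1)"
    using q by (intro sum.cong) (auto simp: nspots_def)
  finally show ?thesis using q nloops_bounds by (simp add: nspots_def)
qed

lemma width_pos: "width > 0" using s_pos by (simp add: width_def)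
lemma shift_pos: "shift > 0" using s_pos width_pos by (simp add: shift_def period_def)
lemma period_pos: "period > 0" using s_pos width_pos by (simp add: period_def)
lemma period_eq: "period = (real n + 1) * shift" by (simp add: shift_def)
lemma loop_len_pos: "loop_len j > 0" using period_pos by (simp add: loop_len_def nspots_def)

lemma Suc_n_width_lt_shift: "(real n + 1) * width < shift"
proof -
  have "(real n + 1) * (2 * (real n + 1) * width) = s"
    using s_pos by (simp add: width_def power2_eq_square)
  then have "(real n + 1) * (2 * (real n + 1) * width) < (real n + 1) * shift"
    using width_pos by (simp add: period_eq[symmetric] period_def)
  then have "2 * (real n + 1) * width < shift" by simp
  moreover have "(real n + 1) * width \<le> 2 * (real n + 1) * width" using width_pos by simp
  ultimately show ?thesis by linarith
qed

lemma n_width_lt_s: "real n * width < s"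
proof -
  have "real n < 2 * (real n + 1)^2" by (simp add: power2_eq_square algebra_simps add_pos_nonneg)
  then have "real n * s < 2 * (real n + 1)^2 * s" using s_pos by simp
  then show ?thesis using s_pos by (simp add: width_def field_simps)
qed

lemma spot_in_loop:
  assumes "i < n" "l < nspots j"
  shows "spot i l \<subseteq> {0<..<loop_len j}"
proof
  fix x assume "x \<in> spot i l"
  then have x: "real l * period + real (i + 1) * shift - width / 2 \<le> x"
    "x \<le> real l * period + real (i + 1) * shift + width / 2"
    by (auto simp: spot_def spot_centre_def)
  have "real l + 1 \<le> real (nspots j)" using assms by linarith
  then have "(real l + 1) * period \<le> loop_len j"
    using period_pos unfolding loop_len_def by (intro mult_right_mono) auto
  then have "real l * period + period \<le> loop_len j" by (simp add: algebra_simps)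
  moreover have "shift \<le> real (i + 1) * shift" "real (i + 1) * shift \<le> real n * shift"
    using assms shift_pos by auto
  moreover have "width \<le> (real n + 1) * width" "0 \<le> real l * period"
    using width_pos period_pos by auto
  moreover have "period = real n * shift + shift" by (simp add: period_eq algebra_simps)
  ultimately have "0 < x" "x < loop_len j" using x Suc_n_width_lt_shift width_pos by linarith+
  then show "x \<in> {0<..<loop_len j}" by simp
qed

lemma spots_separated:
  assumes "l < nspots j" "l' < nspots j" "l \<noteq> l'" "t \<in> spot i l" "t' \<in> spot i l'"
  shows "s \<le> circ_dist (loop_len j) t t'"
proof -
  define X where "X = \<bar>real l - real l'\<bar> * period"
  have "1 \<le> \<bar>real l - real l'\<bar>" "\<bar>real l - real l'\<bar> \<le> real (nspots j) - 1" using assms(1-3) by linarith+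
  then have "period \<le> X" "X \<le> (real (nspots j) - 1) * period"
    using period_pos unfolding X_def by (auto intro: mult_right_mono)
  then have X: "period \<le> X" "X \<le> loop_len j - period"
    by (simp_all add: loop_len_def algebra_simps)
  have "\<bar>t - spot_centre i l\<bar> \<le> width / 2" "\<bar>t' - spot_centre i l'\<bar> \<le> width / 2"
    using assms(4,5) unfolding spot_def atLeastAtMost_iff by linarith+
  moreover have "\<bar>spot_centre i l - spot_centre i l'\<bar> = X"
    unfolding X_def spot_centre_def using period_pos by (simp add: abs_mult flip: left_diff_distrib)
  ultimately have "X - width \<le> \<bar>t - t'\<bar>" "\<bar>t - t'\<bar> \<le> X + width" by linarith+
  then show ?thesis using X unfolding circ_dist_def period_def by simp
qed

text \<open>The gap exceeds c period by D, which is within nspots j width of 0 by the hypotheses,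
  but equals Z shift up to width for an integer Z \<equiv> q - p (mod n + 1), hence Z \<noteq> 0.\<close>

lemma spot_gap_not_rigid:
  assumes j: "j < nloops" and pq: "p < n" "q < n" "p \<noteq> q" and l: "lp < nspots j" "lq < nspots j"
    and T: "Tp \<in> spot p lp" "Tq \<in> spot q lq"
    and c: "real c * s \<le> cw_gap (loop_len j) Tp Tq"
      "cw_gap (loop_len j) Tp Tq \<le> loop_len j - (real (nspots j) - real c) * s"
  shows False
proof -
  define m where "m = nspots j"
  define g where "g = cw_gap (loop_len j) Tp Tq"
  have "g = Tq - Tp + real (if Tp < Tq then 0 else 1 :: nat) * loop_len j"
    by (simp add: g_def cw_gap_def)
  then obtain b :: nat where g: "g = Tq - Tp + real b * loop_len j" by blast
  have mw: "real m * width \<le> real n * width"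
    using nspots_bounds[OF j] width_pos by (intro mult_right_mono) (auto simp: m_def)
  have len: "loop_len j = real m * s + real m * width"
    by (simp add: loop_len_def period_def m_def algebra_simps)
  have "g \<le> loop_len j"
    using T spot_in_loop[OF pq(1) l(1)] spot_in_loop[OF pq(2) l(2)]
    unfolding g_def by (intro cw_gap_le) auto
  then have "real c * s < (real m + 1) * s" using c len mw n_width_lt_s
    by (simp add: g_def algebra_simps)
  then have "c \<le> m" using s_pos by simp
  then have cw: "real c * width \<le> real m * width" using width_pos by (intro mult_right_mono) auto
  define D where "D = g - real c * period"
  have "real c * s \<le> g" "g \<le> real c * s + real m * width"
    using c len unfolding g_def m_def by (simp_all add: algebra_simps)
  moreover have "0 \<le> real c * width" using width_pos by simp
  ultimately have D: "\<bar>D\<bar> \<le> real m * width"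
    using cw unfolding abs_le_iff D_def period_def distrib_left by linarith
  define Z :: int where
    "Z = (int lq - int lp + int b * int m - int c) * (int n + 1) + int q - int p"
  have "Z \<noteq> 0"
  proof
    assume "Z = 0"
    then have "(int q - int p) = (int lp + int c - int lq - int b * int m) * (int n + 1)"
      by (simp add: Z_def algebra_simps)
    then have "int n + 1 dvd \<bar>int q - int p\<bar>" by simp
    moreover have "0 < \<bar>int q - int p\<bar>" "\<bar>int q - int p\<bar> < int n + 1" using pq by auto
    ultimately show False using zdvd_not_zless by blast
  qed
  then have Z: "shift \<le> \<bar>real_of_int Z * shift\<bar>" using shift_pos by (simp add: abs_mult)
  have dev: "\<bar>Tp - spot_centre p lp\<bar> \<le> width / 2" "\<bar>Tq - spot_centre q lq\<bar> \<le> width / 2"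
    using T unfolding spot_def atLeastAtMost_iff by linarith+
  have "D = real_of_int Z * shift + ((Tq - spot_centre q lq) - (Tp - spot_centre p lp))"
    unfolding D_def Z_def g loop_len_def spot_centre_def period_eq m_def[symmetric]
    by (simp add: algebra_simps)
  then have "shift - width \<le> \<bar>D\<bar>" using Z dev by (simp add: abs_if split: if_splits)
  then show False using D mw Suc_n_width_lt_shift by (simp add: algebra_simps)
qed

definition G :: "(nat, nat) cgraph" where
  "G = \<lparr>verts = {..<r}, edges = {..<r}, src = id, tgt = id, elen = loop_len\<rparr>"

definition \<mu> :: "nat \<Rightarrow> nat \<Rightarrow> real measure" where
  "\<mu> i e = density lborel (indicator (support i e))"

lemma support_borel: "support i j \<in> sets borel"
  unfolding support_def spot_def by auto

lemma support_in_loop: "i < n \<Longrightarrow> support i j \<subseteq> {0<..<loop_len j}"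
  unfolding support_def using spot_in_loop by auto

lemma wf_G: "wf_cgraph G"
  using loop_len_pos by (auto simp: wf_cgraph_def G_def)

lemma valuation_G:
  assumes "i < n"
  shows "valuation G (\<mu> i)"
  unfolding valuation_def
proof (intro ballI conjI allI)
  fix e
  show "sets (\<mu> i e) = sets borel" by (simp add: \<mu>_def)
  have "emeasure (\<mu> i e) (space (\<mu> i e)) = emeasure lborel (support i e)"
    unfolding \<mu>_def by (subst emeasure_restricted) (auto simp: support_borel)
  also have "\<dots> \<le> emeasure lborel {0..loop_len e}"
    using support_in_loop[OF assms, of e] by (intro emeasure_mono) auto
  also have "\<dots> < \<infinity>" using loop_len_pos[of e] by simp
  finally show "finite_measure (\<mu> i e)" by (intro finite_measureI) auto
  fix t
  have "emeasure (\<mu> i e) {t} = emeasure lborel (support i e \<inter> {t})"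
    unfolding \<mu>_def by (subst emeasure_restricted) (auto simp: support_borel)
  also have "\<dots> \<le> emeasure lborel {t}" by (intro emeasure_mono) auto
  finally show "emeasure (\<mu> i e) {t} = 0" by simp
qed

lemma union_of_cycles_G: "union_of_cycles G r"
  unfolding union_of_cycles_def
  by (rule exI[of _ "\<lambda>j. ([j], [j])"]) (auto simp: is_cycle_def G_def)

lemma FvsNum_G: "FvsNum G = r"
  unfolding FvsNum_def
proof (rule Least_equality)
  show "\<exists>S\<subseteq>verts G. card S = r \<and> acyclic_g (delete_verts G S)"
    by (rule exI[of _ "{..<r}"]) (auto simp: G_def acyclic_g_def delete_verts_def is_cycle_def)
next
  fix k assume "\<exists>S\<subseteq>verts G. card S = k \<and> acyclic_g (delete_verts G S)"
  then obtain X where X: "X \<subseteq> {..<r}" "card X = k" "acyclic_g (delete_verts G X)"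
    by (auto simp: G_def)
  show "r \<le> k"
  proof (rule ccontr)
    assume "\<not> r \<le> k"
    then have "X \<noteq> {..<r}" using X by auto
    then obtain j where "j < r" "j \<notin> X" using X by auto
    then have "is_cycle (delete_verts G X) [j] [j]"
      by (auto simp: is_cycle_def delete_verts_def G_def)
    then show False using X by (auto simp: acyclic_g_def)
  qed
qed

definition "nparts = n + nloops - 1"

text \<open>Enumeration of an agent's spots: the nspots 0 spots on loop 0 first, then two per loop.\<close>

definition "spot_loop x = (if x < nspots 0 then 0 else 1 + (x - nspots 0) div 2)"
definition "spot_index x = (if x < nspots 0 then x else (x - nspots 0) mod 2)"

lemma nparts_pos: "0 < nparts"
  using n_ge_2 nloops_bounds by (simp add: nparts_def)

lemma nspots_0: "nspots 0 = n - nloops + 1"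
  using nloops_bounds by (simp add: nspots_def)

lemma spot_enum_range: "x < nparts \<Longrightarrow> spot_loop x < nloops \<and> spot_index x < nspots (spot_loop x)"
  using nloops_bounds n_ge_2 unfolding spot_loop_def spot_index_def nparts_def nspots_0
  by (auto simp: nspots_def)

lemma spot_enum_inj:
  assumes "spot_loop x = spot_loop y" "spot_index x = spot_index y"
  shows "x = y"
proof (cases "x < nspots 0 \<or> y < nspots 0")
  case True
  then show ?thesis using assms unfolding spot_loop_def spot_index_def by (auto split: if_splits)
next
  case False
  then have "(x - nspots 0) div 2 = (y - nspots 0) div 2" "(x - nspots 0) mod 2 = (y - nspots 0) mod 2"
    using assms unfolding spot_loop_def spot_index_def by auto
  then have "x - nspots 0 = y - nspots 0" by (metis div_mult_mod_eq)
  then show ?thesis using False by linarith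
qed

end

locale counterexample_extension = counterexample +
  fixes H :: "(nat, nat) cgraph" and \<nu> :: "nat \<Rightarrow> nat \<Rightarrow> real measure"
  assumes extends: "extends_by_trees G H"
    and zero_ext: "\<forall>i<n. zero_extension G H (\<mu> i) (\<nu> i)"
begin

sublocale loop_cake H r loop_len
proof
  fix e assume e: "e \<in> edges H" "src H e < r \<or> tgt H e < r"
  show "e < r"
  proof (rule ccontr)
    assume "\<not> e < r"
    then have "e \<in> edges H - edges G" using e by (auto simp: G_def)
    then show False using extends e by (auto simp: extends_by_trees_def G_def)
  qed
qed (use extends loop_len_pos in \<open>auto simp: extends_by_trees_def G_def\<close>)

lemma valuation_H: "i < n \<Longrightarrow> valuation H (\<nu> i)"
  using zero_ext by (auto simp: zero_extension_def)

lemma val_spot: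
  assumes i: "i < n" and j: "j < nloops" and l: "l < nspots j"
  shows "val H (\<nu> i) (arc j (spot i l)) = width"
proof -
  have jr: "j < r" using j nloops_bounds by simp
  have "val H (\<nu> i) (arc j (spot i l)) = (\<Sum>e\<in>edges H. if e = j then measure (\<nu> i j) (spot i l) else 0)"
    unfolding val_def by (intro sum.cong refl) (simp add: arc_param_set[OF jr spot_in_loop[OF i l]])
  also have "\<dots> = measure (\<mu> i j) (spot i l)"
    using extends loop[OF jr] zero_ext i jr
    by (simp add: extends_by_trees_def wf_cgraph_def zero_extension_def G_def)
  also have "\<dots> = measure lborel (support i j \<inter> spot i l)"
    unfolding \<mu>_def by (rule measure_restricted) (auto simp: support_borel spot_def)
  also have "support i j \<inter> spot i l = spot i l" using j l by (auto simp: support_def)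
  also have "measure lborel (spot i l) = width" using width_pos by (simp add: spot_def)
  finally show ?thesis .
qed

lemma width_le_MMS: "i < n \<Longrightarrow> width \<le> MMS H (\<nu> i) nparts s"
proof (rule MMS_ge[OF valuation_H _ nparts_pos])
  assume i: "i < n"
  define P :: "nat \<Rightarrow> (nat, nat) cpoint set" where
    "P x = arc (spot_loop x) (spot i (spot_index x))" for x
  show "\<forall>x<nparts. width \<le> val H (\<nu> i) (P x)"
    using val_spot[OF i] spot_enum_range unfolding P_def by auto
  have far: "s \<le> circ_dist (loop_len (spot_loop x)) t t'"
    if "x < nparts" "y < nparts" "x \<noteq> y" "spot_loop x = spot_loop y"
      "t \<in> spot i (spot_index x)" "t' \<in> spot i (spot_index y)" for x y t t'
  proof -
    have "spot_index x \<noteq> spot_index y" using spot_enum_inj that(3,4) by blast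
    then show ?thesis
      using spots_separated[OF _ _ _ that(5,6)] spot_enum_range[OF that(1)] spot_enum_range[OF that(2)]
        that(4) by simp
  qed
  show "sep_family H s nparts P"
    unfolding sep_family_def
  proof (intro conjI allI impI)
    fix x assume "x < nparts"
    then have "spot_loop x < r" "spot_index x < nspots (spot_loop x)"
      using spot_enum_range nloops_bounds by (auto intro: order.strict_trans2)
    then show "connected_piece H (P x)"
      using spot_in_loop[OF i] unfolding P_def spot_def by (intro connected_piece_arc) auto
  next
    fix x y assume xy: "x < nparts" "y < nparts" "x \<noteq> y"
    show "P x \<inter> P y = {}"
    proof (rule ccontr)
      assume "P x \<inter> P y \<noteq> {}"
      then obtain t where "spot_loop x = spot_loop y" "t \<in> spot i (spot_index x)" "t \<in> spot i (spot_index y)"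
        by (auto simp: P_def arc_def)
      then have "s \<le> circ_dist (loop_len (spot_loop x)) t t" by (rule far[OF xy])
      then show False using s_pos by (simp add: circ_dist_def)
    qed
    show "ereal s \<le> SetDist H (P x) (P y)"
    proof (rule SetDist_greatest)
      fix a b assume "a \<in> P x" "b \<in> P y"
      then obtain t t' where t: "a = Pt (spot_loop x) t" "t \<in> spot i (spot_index x)"
        "b = Pt (spot_loop y) t'" "t' \<in> spot i (spot_index y)"
        by (auto simp: P_def arc_def)
      have "on_loop (spot_loop x) a t"
        using t spot_in_loop[OF i] spot_enum_range[OF xy(1)] nloops_bounds by (fastforce simp: on_loop_def)
      then show "ereal s \<le> Dist H a b"
      proof (rule Dist_ge_on_loop)
        fix \<theta>' assume "on_loop (spot_loop x) b \<theta>'"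
        then have "spot_loop y = spot_loop x" "\<theta>' = t'" using t by (auto simp: on_loop_def)
        then show "s \<le> circ_dist (loop_len (spot_loop x)) t \<theta>'" using far[OF xy] t by auto
      qed
    qed
  qed
qed

lemma positive_val_meets_spot:
  assumes i: "i < n" and pos: "0 < val H (\<nu> i) X"
  shows "\<exists>j<nloops. \<exists>l<nspots j. \<exists>t\<in>spot i l. Pt j t \<in> X"
proof -
  obtain e where e: "e \<in> edges H" and mp: "0 < measure (\<nu> i e) {t. 0 < t \<and> t < elen H e \<and> Pt e t \<in> X}"
  proof (rule ccontr)
    assume "\<not> thesis"
    then have "val H (\<nu> i) X \<le> 0" using that unfolding val_def by (intro sum_nonpos) force
    then show False using pos by simp
  qed
  have "e < r"
  proof (rule ccontr)
    assume "\<not> e < r"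
    then have "emeasure (\<nu> i e) {0<..<elen H e} = 0" "sets (\<nu> i e) = sets borel"
      using zero_ext valuation_H[OF i] i e by (auto simp: zero_extension_def valuation_def G_def)
    moreover have "emeasure (\<nu> i e) {t. 0 < t \<and> t < elen H e \<and> Pt e t \<in> X} \<le> emeasure (\<nu> i e) {0<..<elen H e}"
      using calculation(2) by (intro emeasure_mono) auto
    ultimately show False using mp by (simp add: measure_def)
  qed
  then have "0 < measure (\<mu> i e) {t. 0 < t \<and> t < elen H e \<and> Pt e t \<in> X}"
    using mp zero_ext i by (simp add: zero_extension_def G_def)
  then obtain t where t: "Pt e t \<in> X" "t \<in> support i e"
    using measure_restricted_pos_imp_meets[OF support_borel] unfolding \<mu>_def by blast
  then show ?thesis by (auto simp: support_def split: if_splits)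
qed

lemma no_MMS_allocation:
  "\<not> (\<exists>A. sep_family H s n A \<and> (\<forall>i<n. MMS H (\<nu> i) nparts s \<le> val H (\<nu> i) (A i)))"
proof
  assume "\<exists>A. sep_family H s n A \<and> (\<forall>i<n. MMS H (\<nu> i) nparts s \<le> val H (\<nu> i) (A i))"
  then obtain A where A: "sep_family H s n A" "\<forall>i<n. MMS H (\<nu> i) nparts s \<le> val H (\<nu> i) (A i)"
    by blast
  have "\<forall>i<n. \<exists>j<nloops. \<exists>l<nspots j. \<exists>t\<in>spot i l. Pt j t \<in> A i"
  proof (intro allI impI)
    fix i assume i: "i < n"
    have "0 < val H (\<nu> i) (A i)" using width_le_MMS[OF i] A(2) i width_pos by force
    then show "\<exists>j<nloops. \<exists>l<nspots j. \<exists>t\<in>spot i l. Pt j t \<in> A i"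
      by (rule positive_val_meets_spot[OF i])
  qed
  then obtain J Lf T where JLT: "\<forall>i<n. J i < nloops \<and> Lf i < nspots (J i) \<and>
      T i \<in> spot i (Lf i) \<and> Pt (J i) (T i) \<in> A i"
    by metis
  have "J ` {..<n} \<subseteq> {..<nloops}" using JLT by auto
  moreover have "(\<Sum>j<nloops. nspots j - 1) < card {..<n}" using sum_nspots n_ge_2 by simp
  ultimately obtain j where j: "j < nloops" and crowded: "nspots j \<le> card {i\<in>{..<n}. J i = j}"
    using pigeonhole_weighted[of "{..<n}" "{..<nloops}" J nspots] by auto
  define F where "F = {i\<in>{..<n}. J i = j}"
  have F: "i < n \<and> Lf i < nspots j \<and> T i \<in> spot i (Lf i) \<and> Pt j (T i) \<in> A i" if "i \<in> F" for i
    using that JLT by (auto simp: F_def)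
  have in_loop: "\<forall>i\<in>F. T i \<in> {0<..<loop_len j}" using F spot_in_loop by blast
  have "finite F" "2 \<le> card F" using crowded nspots_bounds[OF j] by (simp_all add: F_def)
  then obtain p q where pq: "p \<in> F" "q \<in> F" "q \<noteq> p"
    by (metis card_le_Suc0_iff_eq not_less_eq_eq numeral_2_eq_2)
  have "j < r" using j nloops_bounds by simp
  have far: "\<forall>i\<in>F. \<forall>i'\<in>F. i \<noteq> i' \<longrightarrow> s \<le> circ_dist (loop_len j) (T i) (T i')"
  proof (intro ballI impI)
    fix i i' assume ii: "i \<in> F" "i' \<in> F" "i \<noteq> i'"
    show "s \<le> circ_dist (loop_len j) (T i) (T i')"
      by (rule sep_family_loop_points[OF A(1) _ _ ii(3) \<open>j < r\<close>])
        (use F[OF ii(1)] F[OF ii(2)] in_loop ii in auto)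
  qed
  obtain c :: nat where c: "real c * s \<le> cw_gap (loop_len j) (T p) (T q)"
      "cw_gap (loop_len j) (T p) (T q) \<le> loop_len j - (real (nspots j) - real c) * s"
    using cw_gap_separated_bounds[OF \<open>finite F\<close> pq s_pos in_loop far crowded[folded F_def]] by blast
  show False
    by (rule spot_gap_not_rigid[where lp = "Lf p" and lq = "Lf q", OF j _ _ pq(3)[symmetric] _ _ _ _ c])
      (use F[OF pq(1)] F[OF pq(2)] in auto)
qed

end

theorem theorem5:
  fixes s :: real and n r :: nat
  assumes "s > 0" and "n \<ge> 2" and "r \<ge> 1"
  shows "\<exists>(G :: (nat, nat) cgraph) (\<mu> :: nat \<Rightarrow> nat \<Rightarrow> real measure).
           wf_cgraph G \<and> union_of_cycles G r \<and> FvsNum G = r \<and>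
           (\<forall>i<n. valuation G (\<mu> i)) \<and>
           (\<forall>(H :: (nat, nat) cgraph) (\<nu> :: nat \<Rightarrow> nat \<Rightarrow> real measure).
              extends_by_trees G H \<and> (\<forall>i<n. zero_extension G H (\<mu> i) (\<nu> i)) \<longrightarrow>
              \<not> (\<exists>A :: nat \<Rightarrow> (nat, nat) cpoint set.
                    sep_family H s n A \<and>
                    (\<forall>i<n. MMS H (\<nu> i) (min (n + r) (2 * n - 1) - 1) s \<le> val H (\<nu> i) (A i))))"
proof -
  interpret counterexample n r s using assms by unfold_locales
  have parts: "min (n + r) (2 * n - 1) - 1 = nparts" unfolding nparts_def nloops_def by auto
  show ?thesis
  proof (intro exI[of _ G] exI[of _ \<mu>] conjI allI impI)
    show "wf_cgraph G" "union_of_cycles G r" "FvsNum G = r"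
      by (fact wf_G union_of_cycles_G FvsNum_G)+
    show "valuation G (\<mu> i)" if "i < n" for i using that by (rule valuation_G)
    fix H \<nu> assume "extends_by_trees G H \<and> (\<forall>i<n. zero_extension G H (\<mu> i) (\<nu> i))"
    then interpret counterexample_extension n r s H \<nu> using assms by unfold_locales auto
    show "\<not> (\<exists>A. sep_family H s n A \<and> (\<forall>i<n. MMS H (\<nu> i) (min (n + r) (2 * n - 1) - 1) s \<le> val H (\<nu> i) (A i)))"
      unfolding parts by (rule no_MMS_allocation)
  qed
qed

end
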